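(* In the setting described in the context: (i) $\operatorname{Tr}_{K/\mathbb{Q}}(\delta_A\alpha)=1$ for each $\alpha\in\{1,\varepsilon_1,\varepsilon_1^{6n+1}\varepsilon_2,\varepsilon_1^{6n+2}\varepsilon_2,\varepsilon_1^{6n+1}\varepsilon_3,\varepsilon_1^{6n+2}\varepsilon_3,\varepsilon_2\varepsilon_3,\varepsilon_1\varepsilon_2\varepsilon_3,\rho\varepsilon_2,\rho\varepsilon_1\varepsilon_2,\gamma_{6n}\varepsilon_1,\gamma_{6n}\varepsilon_1^2,\gamma_{6n+1}\varepsilon_2\varepsilon_3,\gamma_{6n+1}\varepsilon_1\varepsilon_2\varepsilon_3\}$; (ii) for $1\le j\le 3n$, $\operatorname{Tr}_{K/\mathbb{Q}}(\delta_{B,j}^+\alpha)=1$ for each $\alpha\in\{1,\varepsilon_1,\varepsilon_1^{2j-1}\varepsilon_3,\varepsilon_1^{2j}\varepsilon_3,\gamma_{2j-2}\varepsilon_1,\gamma_{2j-2}\varepsilon_1^2,\gamma_{2j},\gamma_{2j}\varepsilon_1\}$; (iii) for $1\le j\le 3n$, $\operatorname{Tr}_{K/\mathbb{Q}}(\delta_{B,j}^-\alpha)=1$ for each $\alpha\in\{1,\varepsilon_1,\varepsilon_1^{2j-1}\varepsilon_3^{-1},\varepsilon_1^{2j}\varepsilon_3^{-1},\gamma_{2j-1},\gamma_{2j-1}\varepsilon_1,\gamma_{2j+1}\varepsilon_1^{-1},\gamma_{2j+1}\}$; (iv) for $1\le j\le 6n+1$, $\operatorname{Tr}_{K/\mathbb{Q}}(\delta_{C,j}^+\alpha)=1$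 for each $\alpha\in\{\varepsilon_1^{-1},1,\varepsilon_1^{-j}\varepsilon_2,\varepsilon_1^{-j+1}\varepsilon_2\}$; (v) for $1\le j\le 6n+1$, $\operatorname{Tr}_{K/\mathbb{Q}}(\delta_{C,j}^-\alpha)=1$ for each $\alpha\in\{1,\varepsilon_1,\varepsilon_1^{j-1}\varepsilon_2,\varepsilon_1^{j}\varepsilon_2\}$.
   Context: For integers $m\ge0$ define integers $x_m,y_m$ by $\frac{x_m+y_m\sqrt5}{2}=\big(\frac{1+\sqrt5}{2}\big)^m$. Let $n\ge0$ be an integer such that $p:=y_{12n+3}^2-1$ and $r:=x_{12n+3}^2-1$ are squarefree, and let $K=\mathbb{Q}(\sqrt5,\sqrt p)$ (note $r=5p$, so $\sqrt r\in K$). Write $X=x_{12n+3}$, $Y=y_{12n+3}$, $[a,b,c,d]:=a+b\sqrt5+c\sqrt p+d\sqrt r$, and $\varepsilon_1=\frac{3+\sqrt5}{2}$, $\varepsilon_2=Y+\sqrt p$, $\varepsilon_3=X+\sqrt r$. Define $\rho:=[\frac{X+Y}{2},0,-\frac12,\frac12]$; for $1\le j\le 6n+1$, $\gamma_j:=[\frac{y_{2j-1}X+1}{2},\frac{x_{2j-1}X-(-1)^j}{10},(-1)^j\frac{x_{2j-1}}{2},(-1)^j\frac{y_{2j-1}}{2}]$, and $\gamma_0:=\gamma_1\varepsilon_1^{-1}\varepsilon_3$. Further \[ \delta_A:=\Big[\tfrac14,-\tfrac1{20},0,-\tfrac{1}{5(X+Y)}\Big],\quad \delta_{B,j}^{\pm}:=\Big[\tfrac14,-\tfrac1{20},\pm\tfrac{X-x_{4j-1}}{20p},\mp\tfrac{X-y_{4j-1}}{4r}\Big]\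 (1\le j\le 3n), \] \[ \delta_{C,j}^{\pm}:=\Big[\tfrac14,\pm\tfrac1{20},-\tfrac{Y-y_{2j-1}}{4p},\mp\tfrac{Y-x_{2j-1}}{4r}\Big]\ (1\le j\le 6n+1). \] *)

theory Defs
  imports Complex_Main "HOL-Computational_Algebra.Squarefree"
begin

definition xy :: "nat \<Rightarrow> int \<times> int" where
  "xy m = (THE (a, b). (real_of_int a + real_of_int b * sqrt 5) / 2 = ((1 + sqrt 5) / 2) ^ m)"

definition xs :: "nat \<Rightarrow> int" where "xs m = fst (xy m)"
definition ys :: "nat \<Rightarrow> int" where "ys m = snd (xy m)"

definition XX :: "nat \<Rightarrow> int" where "XX n = xs (12 * n + 3)"
definition YY :: "nat \<Rightarrow> int" where "YY n = ys (12 * n + 3)"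
definition pp :: "nat \<Rightarrow> int" where "pp n = (YY n)\<^sup>2 - 1"
definition rr :: "nat \<Rightarrow> int" where "rr n = (XX n)\<^sup>2 - 1"

text \<open>Elements of K = Q(sqrt 5, sqrt p): (a,b,c,d) stands for a + b sqrt5 + c sqrt p + d sqrt r,
  where sqrt r = sqrt 5 * sqrt p (r = 5p).\<close>
type_synonym kel = "rat \<times> rat \<times> rat \<times> rat"

definition kmul :: "nat \<Rightarrow> kel \<Rightarrow> kel \<Rightarrow> kel" where
  "kmul n x y = (let p = rat_of_int (pp n) in
     case x of (a, b, c, d) \<Rightarrow> case y of (a', b', c', d') \<Rightarrow>
       (a*a' + 5*b*b' + p*c*c' + 5*p*d*d',
        a*b' + b*a' + p*(c*d' + d*c'),
        a*c' + c*a' + 5*(b*d' + d*b'),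
        a*d' + d*a' + b*c' + c*b'))"

definition kone :: kel where "kone = (1, 0, 0, 0)"

definition kinv :: "nat \<Rightarrow> kel \<Rightarrow> kel" where
  "kinv n x = (THE y. kmul n x y = kone)"

fun kpow :: "nat \<Rightarrow> kel \<Rightarrow> nat \<Rightarrow> kel" where
  "kpow n x 0 = kone"
| "kpow n x (Suc k) = kmul n (kpow n x k) x"

text \<open>Trace K/Q: trace of the Q-linear map (multiplication by x) in the basis 1, sqrt5, sqrt p, sqrt r.\<close>
definition ktr :: "nat \<Rightarrow> kel \<Rightarrow> rat" where
  "ktr n x = fst (kmul n x (1,0,0,0))
           + fst (snd (kmul n x (0,1,0,0)))
           + fst (snd (snd (kmul n x (0,0,1,0))))
           + snd (snd (snd (kmul n x (0,0,0,1))))"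

definition eps1 :: kel where "eps1 = (3/2, 1/2, 0, 0)"
definition eps2 :: "nat \<Rightarrow> kel" where "eps2 n = (rat_of_int (YY n), 0, 1, 0)"
definition eps3 :: "nat \<Rightarrow> kel" where "eps3 n = (rat_of_int (XX n), 0, 0, 1)"

definition rho :: "nat \<Rightarrow> kel" where
  "rho n = (rat_of_int (XX n + YY n) / 2, 0, -1/2, 1/2)"

definition gamma1 :: "nat \<Rightarrow> nat \<Rightarrow> kel" where
  "gamma1 n j = (let X = rat_of_int (XX n); x = rat_of_int (xs (2*j-1)); y = rat_of_int (ys (2*j-1));
                     s = (-1::rat) ^ j in
     ((y * X + 1) / 2, (x * X - s) / 10, s * x / 2, s * y / 2))"

definition gamma :: "nat \<Rightarrow> nat \<Rightarrow> kel" where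
  "gamma n j = (if j = 0 then kmul n (kmul n (gamma1 n 1) (kinv n eps1)) (eps3 n) else gamma1 n j)"

definition deltaA :: "nat \<Rightarrow> kel" where
  "deltaA n = (1/4, -1/20, 0, - 1 / (5 * rat_of_int (XX n + YY n)))"

text \<open>deltaB n j True = delta_{B,j}^+, deltaB n j False = delta_{B,j}^-.\<close>
definition deltaB :: "nat \<Rightarrow> nat \<Rightarrow> bool \<Rightarrow> kel" where
  "deltaB n j pl = (let s = (if pl then 1 else -1 :: rat); X = rat_of_int (XX n);
       p = rat_of_int (pp n); r = rat_of_int (rr n) in
     (1/4, -1/20, s * (X - rat_of_int (xs (4*j-1))) / (20 * p),
      - s * (X - rat_of_int (ys (4*j-1))) / (4 * r)))"

definition deltaC :: "nat \<Rightarrow> nat \<Rightarrow> bool \<Rightarrow> kel" where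
  "deltaC n j pl = (let s = (if pl then 1 else -1 :: rat); Y = rat_of_int (YY n);
       p = rat_of_int (pp n); r = rat_of_int (rr n) in
     (1/4, s / 20, - (Y - rat_of_int (ys (2*j-1))) / (4 * p),
      - s * (Y - rat_of_int (xs (2*j-1))) / (4 * r)))"

end

theory Submission
  imports Defs
begin

text \<open>
  Since \<open>((1 + \<surd>5)/2)^m = (L\<^sub>m + F\<^sub>m \<surd>5)/2\<close>, the numbers \<open>x\<^sub>m, y\<^sub>m\<close> are the
  Lucas and Fibonacci numbers, and \<open>r = 5p\<close> follows from Cassini's relation
  \<open>L\<^sub>m\<^sup>2 - 5 F\<^sub>m\<^sup>2 = 4 (-1)^m\<close>. The trace of \<open>x \<in> K\<close> is four times its rational
  coordinate, so every claim \<open>Tr(\<delta>\<alpha>) = 1\<close> is an identity between rational functions of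
  finitely many Lucas and Fibonacci numbers. In each family all indices lie within distance 4
  of a single odd index \<open>m\<close> (\<open>12n+3\<close>, \<open>4j-1\<close> or \<open>2j-1\<close>), so the addition formulas
  express everything through \<open>L\<^sub>m, F\<^sub>m\<close> (and \<open>X\<close>, \<open>p\<close>), and the identity reduces to
  \<open>L\<^sub>m\<^sup>2 - 5 F\<^sub>m\<^sup>2 = -4\<close> and \<open>X\<^sup>2 = 5p + 1\<close>.
\<close>

section \<open>Lucas and Fibonacci numbers\<close>

fun lucas :: "nat \<Rightarrow> 'a::linordered_idom" where
  "lucas 0 = 2"
| "lucas (Suc 0) = 1"
| "lucas (Suc (Suc m)) = lucas (Suc m) + lucas m"

fun fibonacci :: "nat \<Rightarrow> 'a::linordered_idom" where
  "fibonacci 0 = 0"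
| "fibonacci (Suc 0) = 1"
| "fibonacci (Suc (Suc m)) = fibonacci (Suc m) + fibonacci m"

lemma of_int_lucas [simp]: "of_int (lucas m) = lucas m"
  by (induction m rule: lucas.induct) simp_all

lemma of_int_fibonacci [simp]: "of_int (fibonacci m) = fibonacci m"
  by (induction m rule: fibonacci.induct) simp_all

lemma lucas_ge_1: "1 \<le> (lucas m :: 'a::linordered_idom)"
  by (induction m rule: lucas.induct) simp_all

lemma fibonacci_Suc_ge_1: "1 \<le> (fibonacci (Suc m) :: 'a::linordered_idom)"
  by (induction m rule: fibonacci.induct) simp_all

lemma lucas_fibonacci_Suc:
  "2 * lucas (Suc m) = (lucas m + 5 * fibonacci m :: 'a::linordered_idom)"
  "2 * fibonacci (Suc m) = (lucas m + fibonacci m :: 'a)"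
  by (induction m rule: lucas.induct) auto

lemma lucas_fibonacci_add:
  "2 * lucas (m + k) = (lucas k * lucas m + 5 * fibonacci k * fibonacci m :: 'a::linordered_idom)"
  "2 * fibonacci (m + k) = (fibonacci k * lucas m + lucas k * fibonacci m :: 'a)"
  by (induction k rule: lucas.induct) (auto simp: lucas_fibonacci_Suc ring_distribs)

lemma cassini_lucas_fibonacci:
  "lucas m ^ 2 - 5 * fibonacci m ^ 2 = (4 * (-1) ^ m :: 'a::linordered_idom)"
proof (induction m)
  case (Suc m)
  have "4 * (lucas (Suc m) ^ 2 - 5 * fibonacci (Suc m) ^ 2)
      = (2 * lucas (Suc m)) ^ 2 - 5 * (2 * fibonacci (Suc m) :: 'a) ^ 2"
    by (simp add: power2_eq_square algebra_simps)
  also have "\<dots> = (lucas m + 5 * fibonacci m) ^ 2 - 5 * (lucas m + fibonacci m) ^ 2"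
    by (simp only: lucas_fibonacci_Suc)
  also have "\<dots> = 4 * (- (lucas m ^ 2 - 5 * fibonacci m ^ 2))"
    by (simp add: power2_eq_square algebra_simps)
  finally show ?case
    using Suc.IH by simp
qed simp

lemma cassini_lucas_fibonacci_odd:
  assumes "odd m"
  shows "lucas m ^ 2 - 5 * fibonacci m ^ 2 = (-4 :: 'a::linordered_idom)"
  using assms by (simp add: cassini_lucas_fibonacci)

lemma lucas_fibonacci_diff:
  assumes "k \<le> m"
  shows "2 * (-1) ^ k * lucas (m - k)
      = (lucas k * lucas m - 5 * fibonacci k * fibonacci m :: 'a::linordered_idom)"
    and "2 * (-1) ^ k * fibonacci (m - k)
      = (lucas k * fibonacci m - fibonacci k * lucas m :: 'a)"
proof -
  obtain i where m: "m = i + k"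
    using assms le_iff_add by (metis add.commute)
  have "2 * (lucas k * lucas m - 5 * fibonacci k * fibonacci m)
      = lucas k * (2 * lucas (i + k)) - 5 * fibonacci k * (2 * fibonacci (i + k) :: 'a)"
    by (simp add: m algebra_simps)
  also have "\<dots> = (lucas k ^ 2 - 5 * fibonacci k ^ 2) * lucas i"
    unfolding lucas_fibonacci_add by (simp add: power2_eq_square algebra_simps)
  finally show "2 * (-1) ^ k * lucas (m - k)
      = (lucas k * lucas m - 5 * fibonacci k * fibonacci m :: 'a)"
    by (simp add: m cassini_lucas_fibonacci)
  have "2 * (lucas k * fibonacci m - fibonacci k * lucas m)
      = lucas k * (2 * fibonacci (i + k)) - fibonacci k * (2 * lucas (i + k) :: 'a)"
    by (simp add: m algebra_simps)
  also have "\<dots> = (lucas k ^ 2 - 5 * fibonacci k ^ 2) * fibonacci i"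
    unfolding lucas_fibonacci_add by (simp add: power2_eq_square algebra_simps)
  finally show "2 * (-1) ^ k * fibonacci (m - k)
      = (lucas k * fibonacci m - fibonacci k * lucas m :: 'a)"
    by (simp add: m cassini_lucas_fibonacci)
qed

lemma lucas_fibonacci_plus_1:
  "lucas (m + 1) = (lucas m + 5 * fibonacci m) / (2 :: 'a::linordered_field)"
  "fibonacci (m + 1) = (lucas m + fibonacci m) / (2 :: 'a)"
  using lucas_fibonacci_add[of m 1, where 'a='a] by (simp_all add: field_simps)

lemma lucas_fibonacci_plus_2:
  "lucas (m + 2) = (3 * lucas m + 5 * fibonacci m) / (2 :: 'a::linordered_field)"
  "fibonacci (m + 2) = (lucas m + 3 * fibonacci m) / (2 :: 'a)"
  using lucas_fibonacci_add[of m 2, where 'a='a] by (simp_all add: eval_nat_numeral field_simps)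

lemma lucas_fibonacci_minus_1:
  assumes "1 \<le> m"
  shows "lucas (m - 1) = (5 * fibonacci m - lucas m) / (2 :: 'a::linordered_field)"
    and "fibonacci (m - 1) = (lucas m - fibonacci m) / (2 :: 'a)"
  using lucas_fibonacci_diff[OF assms, where 'a='a] by (simp_all add: field_simps)

lemma lucas_fibonacci_minus_2:
  assumes "2 \<le> m"
  shows "lucas (m - 2) = (3 * lucas m - 5 * fibonacci m) / (2 :: 'a::linordered_field)"
    and "fibonacci (m - 2) = (3 * fibonacci m - lucas m) / (2 :: 'a)"
  using lucas_fibonacci_diff[OF assms, where 'a='a] by (simp_all add: eval_nat_numeral field_simps)

lemma lucas_fibonacci_minus_4:
  assumes "4 \<le> m"
  shows "lucas (m - 4) = (7 * lucas m - 15 * fibonacci m) / (2 :: 'a::linordered_field)"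
    and "fibonacci (m - 4) = (7 * fibonacci m - 3 * lucas m) / (2 :: 'a)"
  using lucas_fibonacci_diff[OF assms, where 'a='a] by (simp_all add: eval_nat_numeral field_simps)

lemma golden_ratio_power: "(lucas m + fibonacci m * sqrt 5) / 2 = ((1 + sqrt 5) / 2) ^ m"
proof (induction m rule: lucas.induct)
  case (3 m)
  define \<phi> :: real where "\<phi> = (1 + sqrt 5) / 2"
  have "\<phi> * \<phi> = \<phi> + 1"
    by (simp add: \<phi>_def field_simps)
  then have "\<phi> ^ Suc (Suc m) = \<phi> ^ Suc m + \<phi> ^ m"
    by (simp add: mult.assoc[symmetric] distrib_right)
  moreover have "(lucas (Suc (Suc m)) + fibonacci (Suc (Suc m)) * sqrt 5) / 2
    = (lucas (Suc m) + fibonacci (Suc m) * sqrt 5) / 2 + (lucas m + fibonacci m * sqrt 5 :: real) / 2"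
    by (simp add: add_divide_distrib algebra_simps)
  ultimately show ?case
    using "3" unfolding \<phi>_def by simp
qed simp_all

lemma int_square_eq_5_times_square:
  fixes a b :: int
  assumes "a ^ 2 = 5 * b ^ 2"
  shows "b = 0"
proof (rule ccontr)
  assume "b \<noteq> 0"
  with assms have "a \<noteq> 0"
    by auto
  have "prime (5::int)"
    by simp
  then have "multiplicity 5 (a ^ 2) = 2 * multiplicity 5 a"
    and "multiplicity 5 (5 * b ^ 2) = 1 + 2 * multiplicity 5 b"
    using \<open>a \<noteq> 0\<close> \<open>b \<noteq> 0\<close>
    by (simp_all add: prime_elem_multiplicity_mult_distrib prime_elem_multiplicity_power_distrib)
  with assms show False
    by presburger
qed

lemma xy_eq_lucas_fibonacci: "xy m = (lucas m, fibonacci m)"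
  unfolding xy_def
proof (rule the_equality)
  fix z
  assume z: "case z of (a, b) \<Rightarrow>
    (real_of_int a + real_of_int b * sqrt 5) / 2 = ((1 + sqrt 5) / 2) ^ m"
  obtain a b where z_eq: "z = (a, b)"
    by (cases z)
  have diff: "real_of_int (a - lucas m) = real_of_int (fibonacci m - b) * sqrt 5"
    using z golden_ratio_power[of m] unfolding z_eq by (simp add: algebra_simps)
  then have "real_of_int ((a - lucas m) ^ 2) = real_of_int (5 * (fibonacci m - b) ^ 2)"
    by (simp add: power_mult_distrib)
  then have "fibonacci m - b = 0"
    by (simp only: of_int_eq_iff) (rule int_square_eq_5_times_square)
  moreover from diff this have "real_of_int (a - lucas m) = 0"
    by simp
  ultimately show "z = (lucas m, fibonacci m)"
    unfolding z_eq of_int_eq_0_iff by simp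
qed (use golden_ratio_power[of m] in simp)

lemma xs_eq_lucas: "xs m = lucas m"
  and ys_eq_fibonacci: "ys m = fibonacci m"
  by (simp_all add: xs_def ys_def xy_eq_lucas_fibonacci)

lemma XX_eq_lucas: "XX n = lucas (12 * n + 3)"
  and YY_eq_fibonacci: "YY n = fibonacci (12 * n + 3)"
  by (simp_all add: XX_def YY_def xs_eq_lucas ys_eq_fibonacci)

lemma rr_eq_5_pp: "rr n = 5 * pp n"
  using cassini_lucas_fibonacci_odd[of "12 * n + 3", where 'a=int]
  by (simp add: rr_def pp_def XX_eq_lucas YY_eq_fibonacci)

lemma XX_sq_eq_pp: "of_int (XX n) ^ 2 = 5 * of_int (pp n) + (1 :: 'a::comm_ring_1)"
proof -
  have "XX n ^ 2 = 5 * pp n + 1"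
    using rr_eq_5_pp[of n] by (simp add: rr_def)
  then have "of_int (XX n ^ 2) = (of_int (5 * pp n + 1) :: 'a)"
    by (rule arg_cong)
  then show ?thesis
    by simp
qed

lemma pp_pos: "0 < pp n"
proof -
  have idx: "12 * n + 3 = Suc (Suc (Suc (12 * n)))"
    by simp
  have "2 \<le> YY n"
    using fibonacci_Suc_ge_1[of "12 * n", where 'a=int] fibonacci_Suc_ge_1[of "Suc (12 * n)", where 'a=int]
    unfolding YY_eq_fibonacci idx by simp
  then have "2 ^ 2 \<le> YY n ^ 2"
    by (rule power_mono) simp
  then show ?thesis
    by (simp add: pp_def)
qed

section \<open>Arithmetic in \<open>K\<close>\<close>

lemma ktr_eq_fst: "ktr n x = 4 * fst x"
  by (cases x) (simp add: ktr_def kmul_def Let_def)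

lemma kmul_commute: "kmul n x y = kmul n y x"
  by (cases x, cases y) (simp add: kmul_def algebra_simps)

lemma kmul_assoc: "kmul n (kmul n x y) z = kmul n x (kmul n y z)"
  by (cases x, cases y, cases z) (simp add: kmul_def Let_def algebra_simps)

lemma kmul_kone: "kmul n x kone = x"
  by (cases x) (simp add: kmul_def kone_def)

lemma kinv_eqI:
  assumes "kmul n x y = kone"
  shows "kinv n x = y"
  unfolding kinv_def
proof (rule the_equality)
  fix z
  assume z: "kmul n x z = kone"
  have "z = kmul n (kmul n y x) z"
    using assms by (simp add: kmul_commute[of n y] kmul_commute[of n kone] kmul_kone)
  also have "\<dots> = y"
    using z by (simp add: kmul_assoc kmul_kone)
  finally show "z = y" .
qed (fact assms)

lemma kinv_eps1: "kinv n eps1 = (3/2, -1/2, 0, 0)"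
  by (rule kinv_eqI) (simp add: kmul_def eps1_def kone_def)

lemma kinv_eps3: "kinv n (eps3 n) = (of_int (XX n), 0, 0, -1)"
  by (rule kinv_eqI) (simp add: kmul_def eps3_def kone_def XX_sq_eq_pp flip: power2_eq_square)

lemma kpow_eps1: "kpow n eps1 k = (lucas (2 * k) / 2, fibonacci (2 * k) / 2, 0, 0)"
proof (induction k)
  case (Suc k)
  have idx: "2 * Suc k = 2 * k + 2"
    by simp
  show ?case
    unfolding kpow.simps Suc.IH idx lucas_fibonacci_plus_2 by (simp add: eps1_def kmul_def field_simps)
qed (simp add: kone_def)

lemma kpow_kinv_eps1: "kpow n (kinv n eps1) k = (lucas (2 * k) / 2, - fibonacci (2 * k) / 2, 0, 0)"
proof (induction k)
  case (Suc k)
  have idx: "2 * Suc k = 2 * k + 2"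
    by simp
  show ?case
    unfolding kpow.simps Suc.IH idx lucas_fibonacci_plus_2 by (simp add: kinv_eps1 kmul_def field_simps)
qed (simp add: kone_def)

lemma kpow_eps1_below:
  assumes "2 * k + 1 = m"
  shows "kpow n eps1 k = ((5 * fibonacci m - lucas m) / 4, (lucas m - fibonacci m) / 4, 0, 0)"
proof -
  have "1 \<le> m" and k: "2 * k = m - 1"
    using assms by simp_all
  show ?thesis
    unfolding kpow_eps1 k lucas_fibonacci_minus_1[OF \<open>1 \<le> m\<close>] by simp
qed

lemma kpow_eps1_above:
  assumes "2 * k = m + 1"
  shows "kpow n eps1 k = ((lucas m + 5 * fibonacci m) / 4, (lucas m + fibonacci m) / 4, 0, 0)"
  unfolding kpow_eps1 assms lucas_fibonacci_plus_1 by simp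

lemma kpow_kinv_eps1_below:
  assumes "2 * k + 1 = m"
  shows "kpow n (kinv n eps1) k = ((5 * fibonacci m - lucas m) / 4, (fibonacci m - lucas m) / 4, 0, 0)"
proof -
  have "1 \<le> m" and k: "2 * k = m - 1"
    using assms by simp_all
  show ?thesis
    unfolding kpow_kinv_eps1 k lucas_fibonacci_minus_1[OF \<open>1 \<le> m\<close>] by (simp add: field_simps)
qed

lemma kpow_kinv_eps1_above:
  assumes "2 * k = m + 1"
  shows "kpow n (kinv n eps1) k
    = ((lucas m + 5 * fibonacci m) / 4, - (lucas m + fibonacci m) / 4, 0, 0)"
  unfolding kpow_kinv_eps1 assms lucas_fibonacci_plus_1 by (simp add: field_simps)

section \<open>The elements \<open>\<gamma>\<^sub>j\<close>\<close>

definition gamma_form :: "rat \<Rightarrow> rat \<Rightarrow> rat \<Rightarrow> rat \<Rightarrow> kel" where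
  "gamma_form X L F s = ((F * X + 1) / 2, (L * X - s) / 10, s * L / 2, s * F / 2)"

lemma gamma_eq_gamma_form:
  assumes "1 \<le> j"
  shows "gamma n j = gamma_form (of_int (XX n)) (lucas (2 * j - 1)) (fibonacci (2 * j - 1)) ((-1) ^ j)"
  using assms by (simp add: gamma_def gamma1_def gamma_form_def xs_eq_lucas ys_eq_fibonacci Let_def)

text \<open>\<open>\<gamma>\<^sub>0\<close> continues the pattern with \<open>(L_{-1}, F_{-1}) = (-1, 1)\<close>.\<close>

lemma gamma_0_eq_gamma_form: "gamma n 0 = gamma_form (of_int (XX n)) (-1) 1 1"
proof -
  have p: "rat_of_int (pp n) = (of_int (XX n) ^ 2 - 1) / 5"
    using XX_sq_eq_pp[of n, where 'a=rat] by simp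
  have "gamma n 0 = kmul n (kmul n (gamma_form (of_int (XX n)) 1 1 (-1)) (kinv n eps1)) (eps3 n)"
    using gamma_eq_gamma_form[of 1 n] by (simp add: gamma_def)
  also have "\<dots> = gamma_form (of_int (XX n)) (-1) 1 1"
    by (simp add: p gamma_form_def kinv_eps1 eps3_def kmul_def Let_def field_simps power2_eq_square)
  finally show ?thesis .
qed

lemma gamma_even_at:
  assumes "even k" "2 * k = m + 1"
  shows "gamma n k = gamma_form (of_int (XX n)) (lucas m) (fibonacci m) 1"
proof -
  have "1 \<le> k" and k: "2 * k - 1 = m"
    using assms by simp_all
  with \<open>even k\<close> show ?thesis
    unfolding gamma_eq_gamma_form[OF \<open>1 \<le> k\<close>] k by simp
qed

lemma gamma_even_below:
  assumes "even k" "2 * k + 3 = m"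
  shows "gamma n k = gamma_form (of_int (XX n))
    ((7 * lucas m - 15 * fibonacci m) / 2) ((7 * fibonacci m - 3 * lucas m) / 2) 1"
proof (cases "k = 0")
  case True
  with assms have "m = 3"
    by simp
  with \<open>k = 0\<close> show ?thesis
    by (simp add: gamma_0_eq_gamma_form eval_nat_numeral)
next
  case False
  then have "1 \<le> k" "4 \<le> m" and k: "2 * k - 1 = m - 4"
    using assms by simp_all
  with \<open>even k\<close> show ?thesis
    unfolding gamma_eq_gamma_form[OF \<open>1 \<le> k\<close>] k lucas_fibonacci_minus_4[OF \<open>4 \<le> m\<close>]
    by simp
qed

lemma gamma_odd_below:
  assumes "odd k" "2 * k + 1 = m"
  shows "gamma n k = gamma_form (of_int (XX n))
    ((3 * lucas m - 5 * fibonacci m) / 2) ((3 * fibonacci m - lucas m) / 2) (-1)"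
proof -
  have "1 \<le> k" "2 \<le> m" and k: "2 * k - 1 = m - 2"
    using assms by presburger+
  with \<open>odd k\<close> show ?thesis
    unfolding gamma_eq_gamma_form[OF \<open>1 \<le> k\<close>] k lucas_fibonacci_minus_2[OF \<open>2 \<le> m\<close>]
    by simp
qed

lemma gamma_odd_above:
  assumes "odd k" "2 * k = m + 3"
  shows "gamma n k = gamma_form (of_int (XX n))
    ((3 * lucas m + 5 * fibonacci m) / 2) ((lucas m + 3 * fibonacci m) / 2) (-1)"
proof -
  have "1 \<le> k" and k: "2 * k - 1 = m + 2"
    using assms by presburger+
  with \<open>odd k\<close> show ?thesis
    unfolding gamma_eq_gamma_form[OF \<open>1 \<le> k\<close>] k lucas_fibonacci_plus_2 by simp
qed

section \<open>The trace identities\<close>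

lemma deltaB_eq:
  "deltaB n j pl = (let s = (if pl then 1 else -1); X = of_int (XX n); p = of_int (pp n) in
    (1/4, -1/20, s * (X - lucas (4 * j - 1)) / (20 * p), - s * (X - fibonacci (4 * j - 1)) / (20 * p)))"
  by (simp add: deltaB_def rr_eq_5_pp xs_eq_lucas ys_eq_fibonacci Let_def)

lemma deltaC_eq:
  "deltaC n j pl = (let s = (if pl then 1 else -1); Y = of_int (YY n); p = of_int (pp n) in
    (1/4, s / 20, - (Y - fibonacci (2 * j - 1)) / (4 * p), - s * (Y - lucas (2 * j - 1)) / (20 * p)))"
  by (simp add: deltaC_def rr_eq_5_pp xs_eq_lucas ys_eq_fibonacci Let_def)

lemma ktr_deltaA:
  "\<forall>\<alpha> \<in> {kone, eps1,
      kmul n (kpow n eps1 (6 * n + 1)) (eps2 n), kmul n (kpow n eps1 (6 * n + 2)) (eps2 n),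
      kmul n (kpow n eps1 (6 * n + 1)) (eps3 n), kmul n (kpow n eps1 (6 * n + 2)) (eps3 n),
      kmul n (eps2 n) (eps3 n), kmul n (kmul n eps1 (eps2 n)) (eps3 n),
      kmul n (rho n) (eps2 n), kmul n (kmul n (rho n) eps1) (eps2 n),
      kmul n (gamma n (6 * n)) eps1, kmul n (gamma n (6 * n)) (kpow n eps1 2),
      kmul n (kmul n (gamma n (6 * n + 1)) (eps2 n)) (eps3 n),
      kmul n (kmul n (kmul n (gamma n (6 * n + 1)) eps1) (eps2 n)) (eps3 n)}.
    ktr n (kmul n (deltaA n) \<alpha>) = 1"
proof -
  define m where "m = 12 * n + 3"
  have "odd m" "odd (6 * n + 1)" "even (6 * n)" and idx: "12 * n + 3 = m"
    and below: "2 * (6 * n + 1) + 1 = m" and above: "2 * (6 * n + 2) = m + 1"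
    and below_gamma: "2 * (6 * n) + 3 = m" and m: "m = Suc (12 * n + 2)"
    unfolding m_def by presburger+
  have "1 \<le> (fibonacci m :: rat)"
    unfolding m by (rule fibonacci_Suc_ge_1)
  then have "0 < lucas m + (fibonacci m :: rat)"
    using lucas_ge_1[of m, where 'a=rat] by linarith
  moreover have "rat_of_int (pp n) = fibonacci m ^ 2 - 1"
    by (simp add: pp_def YY_eq_fibonacci idx)
  ultimately show ?thesis
    using cassini_lucas_fibonacci_odd[OF \<open>odd m\<close>, where 'a=rat] pp_pos[of n]
    unfolding deltaA_def rho_def eps2_def eps3_def XX_eq_lucas YY_eq_fibonacci idx
      kpow_eps1_below[OF below] kpow_eps1_above[OF above]
      gamma_even_below[OF \<open>even (6 * n)\<close> below_gamma]
      gamma_odd_below[OF \<open>odd (6 * n + 1)\<close> below]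
    by (simp add: ktr_eq_fst kmul_def gamma_form_def kpow_eps1 eps1_def kone_def Let_def
        eval_nat_numeral)
      (simp add: field_simps; algebra)
qed

lemma ktr_deltaB_plus:
  assumes "1 \<le> j"
  shows "\<forall>\<alpha> \<in> {kone, eps1,
           kmul n (kpow n eps1 (2 * j - 1)) (eps3 n), kmul n (kpow n eps1 (2 * j)) (eps3 n),
           kmul n (gamma n (2 * j - 2)) eps1, kmul n (gamma n (2 * j - 2)) (kpow n eps1 2),
           gamma n (2 * j), kmul n (gamma n (2 * j)) eps1}.
           ktr n (kmul n (deltaB n j True) \<alpha>) = 1"
proof -
  define m where "m = 4 * j - 1"
  have "odd m" "even (2 * j - 2)" "even (2 * j)" and idx: "4 * j - 1 = m"
    and below: "2 * (2 * j - 1) + 1 = m" and above: "2 * (2 * j) = m + 1"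
    and below_gamma: "2 * (2 * j - 2) + 3 = m"
    using assms unfolding m_def by presburger+
  show ?thesis
    using cassini_lucas_fibonacci_odd[OF \<open>odd m\<close>, where 'a=rat] pp_pos[of n]
      XX_sq_eq_pp[of n, where 'a=rat]
    unfolding deltaB_eq idx kpow_eps1_below[OF below] kpow_eps1_above[OF above]
      gamma_even_below[OF \<open>even (2 * j - 2)\<close> below_gamma]
      gamma_even_at[OF \<open>even (2 * j)\<close> above]
    by (simp add: ktr_eq_fst kmul_def gamma_form_def kpow_eps1 eps1_def eps3_def kone_def Let_def
        eval_nat_numeral)
      (simp add: field_simps; algebra)
qed

lemma ktr_deltaB_minus:
  assumes "1 \<le> j"
  shows "\<forall>\<alpha> \<in> {kone, eps1,
           kmul n (kpow n eps1 (2 * j - 1)) (kinv n (eps3 n)),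
           kmul n (kpow n eps1 (2 * j)) (kinv n (eps3 n)),
           gamma n (2 * j - 1), kmul n (gamma n (2 * j - 1)) eps1,
           kmul n (gamma n (2 * j + 1)) (kinv n eps1), gamma n (2 * j + 1)}.
           ktr n (kmul n (deltaB n j False) \<alpha>) = 1"
proof -
  define m where "m = 4 * j - 1"
  have "odd m" "odd (2 * j - 1)" "odd (2 * j + 1)" and idx: "4 * j - 1 = m"
    and below: "2 * (2 * j - 1) + 1 = m" and above: "2 * (2 * j) = m + 1"
    and above_gamma: "2 * (2 * j + 1) = m + 3"
    using assms unfolding m_def by presburger+
  show ?thesis
    using cassini_lucas_fibonacci_odd[OF \<open>odd m\<close>, where 'a=rat] pp_pos[of n]
      XX_sq_eq_pp[of n, where 'a=rat]
    unfolding deltaB_eq idx kpow_eps1_below[OF below] kpow_eps1_above[OF above]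
      gamma_odd_below[OF \<open>odd (2 * j - 1)\<close> below]
      gamma_odd_above[OF \<open>odd (2 * j + 1)\<close> above_gamma] kinv_eps1 kinv_eps3
    by (simp add: ktr_eq_fst kmul_def gamma_form_def eps1_def kone_def Let_def)
      (simp add: field_simps; algebra)
qed

lemma ktr_deltaC_plus:
  assumes "1 \<le> j"
  shows "\<forall>\<alpha> \<in> {kinv n eps1, kone,
           kmul n (kpow n (kinv n eps1) j) (eps2 n), kmul n (kpow n (kinv n eps1) (j - 1)) (eps2 n)}.
           ktr n (kmul n (deltaC n j True) \<alpha>) = 1"
proof -
  define m where "m = 2 * j - 1"
  have "odd m" and idx: "2 * j - 1 = m" and below: "2 * (j - 1) + 1 = m" and above: "2 * j = m + 1"
    using assms unfolding m_def by presburger+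
  show ?thesis
    using cassini_lucas_fibonacci_odd[OF \<open>odd m\<close>, where 'a=rat] pp_pos[of n]
    unfolding deltaC_eq idx kpow_kinv_eps1_below[OF below] kpow_kinv_eps1_above[OF above]
    by (simp add: ktr_eq_fst kmul_def kinv_eps1 eps2_def kone_def Let_def)
      (simp add: field_simps; algebra)
qed

lemma ktr_deltaC_minus:
  assumes "1 \<le> j"
  shows "\<forall>\<alpha> \<in> {kone, eps1,
           kmul n (kpow n eps1 (j - 1)) (eps2 n), kmul n (kpow n eps1 j) (eps2 n)}.
           ktr n (kmul n (deltaC n j False) \<alpha>) = 1"
proof -
  define m where "m = 2 * j - 1"
  have "odd m" and idx: "2 * j - 1 = m" and below: "2 * (j - 1) + 1 = m" and above: "2 * j = m + 1"
    using assms unfolding m_def by presburger+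
  show ?thesis
    using cassini_lucas_fibonacci_odd[OF \<open>odd m\<close>, where 'a=rat] pp_pos[of n]
    unfolding deltaC_eq idx kpow_eps1_below[OF below] kpow_eps1_above[OF above]
    by (simp add: ktr_eq_fst kmul_def eps1_def eps2_def kone_def Let_def)
      (simp add: field_simps; algebra)
qed

theorem proposition4p3:
  fixes n :: nat
  assumes "squarefree (pp n)" and "squarefree (rr n)"
  shows
   "(\<forall>\<alpha> \<in> {kone, eps1,
        kmul n (kpow n eps1 (6*n+1)) (eps2 n), kmul n (kpow n eps1 (6*n+2)) (eps2 n),
        kmul n (kpow n eps1 (6*n+1)) (eps3 n), kmul n (kpow n eps1 (6*n+2)) (eps3 n),
        kmul n (eps2 n) (eps3 n), kmul n (kmul n eps1 (eps2 n)) (eps3 n),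
        kmul n (rho n) (eps2 n), kmul n (kmul n (rho n) eps1) (eps2 n),
        kmul n (gamma n (6*n)) eps1, kmul n (gamma n (6*n)) (kpow n eps1 2),
        kmul n (kmul n (gamma n (6*n+1)) (eps2 n)) (eps3 n),
        kmul n (kmul n (kmul n (gamma n (6*n+1)) eps1) (eps2 n)) (eps3 n)}.
      ktr n (kmul n (deltaA n) \<alpha>) = 1)
  \<and> (\<forall>j. 1 \<le> j \<and> j \<le> 3*n \<longrightarrow>
      (\<forall>\<alpha> \<in> {kone, eps1,
         kmul n (kpow n eps1 (2*j-1)) (eps3 n), kmul n (kpow n eps1 (2*j)) (eps3 n),
         kmul n (gamma n (2*j-2)) eps1, kmul n (gamma n (2*j-2)) (kpow n eps1 2),
         gamma n (2*j), kmul n (gamma n (2*j)) eps1}.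
        ktr n (kmul n (deltaB n j True) \<alpha>) = 1))
  \<and> (\<forall>j. 1 \<le> j \<and> j \<le> 3*n \<longrightarrow>
      (\<forall>\<alpha> \<in> {kone, eps1,
         kmul n (kpow n eps1 (2*j-1)) (kinv n (eps3 n)), kmul n (kpow n eps1 (2*j)) (kinv n (eps3 n)),
         gamma n (2*j-1), kmul n (gamma n (2*j-1)) eps1,
         kmul n (gamma n (2*j+1)) (kinv n eps1), gamma n (2*j+1)}.
        ktr n (kmul n (deltaB n j False) \<alpha>) = 1))
  \<and> (\<forall>j. 1 \<le> j \<and> j \<le> 6*n+1 \<longrightarrow>
      (\<forall>\<alpha> \<in> {kinv n eps1, kone,
         kmul n (kpow n (kinv n eps1) j) (eps2 n), kmul n (kpow n (kinv n eps1) (j-1)) (eps2 n)}.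
        ktr n (kmul n (deltaC n j True) \<alpha>) = 1))
  \<and> (\<forall>j. 1 \<le> j \<and> j \<le> 6*n+1 \<longrightarrow>
      (\<forall>\<alpha> \<in> {kone, eps1,
         kmul n (kpow n eps1 (j-1)) (eps2 n), kmul n (kpow n eps1 j) (eps2 n)}.
        ktr n (kmul n (deltaC n j False) \<alpha>) = 1))"
  using ktr_deltaA[of n] ktr_deltaB_plus[of _ n] ktr_deltaB_minus[of _ n]
    ktr_deltaC_plus[of _ n] ktr_deltaC_minus[of _ n]
  by blast

end
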